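(* For $n\in\mathbb{N}$ let $f_n(z)=e^{nz}$, $a_n\equiv0$, $b_n\equiv\infty$, and $c_n(z)=-e^{in\,\mathrm{Im}(z)}$ on $\mathbb{D}$. Then $a_n,b_n,c_n:\mathbb{D}\to\widehat{\mathbb{C}}$ are continuous, $f_n$ omits $a_n,b_n,c_n$ (i.e. $f_n(z)\notin\{a_n(z),b_n(z),c_n(z)\}$ for all $z\in\mathbb{D}$), $\sigma(a_n(z),b_n(z))=\pi/2$ and $\sigma(a_n(z),c_n(z))=\sigma(b_n(z),c_n(z))=\pi/4$ for all $n$ and all $z\in\mathbb{D}$, but $(f_n)_n$ is not normal in $\mathbb{D}$. In particular, the conclusion of the statement "if each $f$ in a family of meromorphic functions on $\mathbb{D}$ omits three functions $a_f,b_f,c_f$ with $\sigma(a_f,b_f)\sigma(a_f,c_f)\sigma(b_f,c_f)\ge\varepsilon$ on $\mathbb{D}$ then the family is normal" fails if $a_f,b_f,c_f$ are only required to be continuous.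
   Context: $\mathbb{D}$ is the open unit disc, $\widehat{\mathbb{C}}$ the Riemann sphere, and $\sigma$ the spherical (geodesic) metric on $\widehat{\mathbb{C}}$ identified with the sphere of diameter $1$ (so $\sigma(0,\infty)=\pi/2$). Normality is in the sense of Montel: every sequence has a subsequence converging locally uniformly with respect to $\sigma$ to a meromorphic function or to $\infty$. *)

theory Defs
  imports "HOL-Analysis.Analysis"
begin

datatype ecomplex = Fin complex | Infty

text \<open>Chordal distance on the sphere of diameter 1 (stereographic projection).\<close>
fun chordal :: "ecomplex \<Rightarrow> ecomplex \<Rightarrow> real" where
  "chordal (Fin z) (Fin w) = cmod (z - w) / sqrt ((1 + (cmod z)\<^sup>2) * (1 + (cmod w)\<^sup>2))"
| "chordal (Fin z) Infty = 1 / sqrt (1 + (cmod z)\<^sup>2)"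
| "chordal Infty (Fin w) = 1 / sqrt (1 + (cmod w)\<^sup>2)"
| "chordal Infty Infty = 0"

text \<open>Spherical (geodesic) metric on the sphere of diameter 1: a chord of length
  c subtends a great-circle arc of length arcsin c. Thus sigma 0 infinity = pi/2.\<close>
definition sigma :: "ecomplex \<Rightarrow> ecomplex \<Rightarrow> real" where
  "sigma x y = arcsin (chordal x y)"

definition sph_continuous_on :: "complex set \<Rightarrow> (complex \<Rightarrow> ecomplex) \<Rightarrow> bool" where
  "sph_continuous_on D g \<longleftrightarrow>
     (\<forall>z\<in>D. \<forall>e>0. \<exists>d>0. \<forall>w\<in>D. cmod (w - z) < d \<longrightarrow> sigma (g w) (g z) < e)"

text \<open>Meromorphic on D (sphere-valued, the constant infinity allowed):
  near every point of D either g or 1/g is holomorphic.\<close>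
definition sph_meromorphic_on :: "complex set \<Rightarrow> (complex \<Rightarrow> ecomplex) \<Rightarrow> bool" where
  "sph_meromorphic_on D g \<longleftrightarrow>
     (\<forall>z0\<in>D. \<exists>r>0. ball z0 r \<subseteq> D \<and>
        ((\<exists>h. h holomorphic_on ball z0 r \<and> (\<forall>w\<in>ball z0 r. g w = Fin (h w))) \<or>
         (\<exists>h. h holomorphic_on ball z0 r \<and>
              (\<forall>w\<in>ball z0 r. (h w = 0 \<longrightarrow> g w = Infty) \<and> (h w \<noteq> 0 \<longrightarrow> g w = Fin (1 / h w))))))"

definition sph_loc_unif_conv :: "complex set \<Rightarrow> (nat \<Rightarrow> complex \<Rightarrow> ecomplex) \<Rightarrow> (complex \<Rightarrow> ecomplex) \<Rightarrow> bool" where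
  "sph_loc_unif_conv D F g \<longleftrightarrow>
     (\<forall>K. compact K \<and> K \<subseteq> D \<longrightarrow>
        (\<forall>e>0. \<exists>N. \<forall>k\<ge>N. \<forall>z\<in>K. sigma (F k z) (g z) < e))"

definition normal_family :: "complex set \<Rightarrow> (complex \<Rightarrow> ecomplex) set \<Rightarrow> bool" where
  "normal_family D Fam \<longleftrightarrow>
     (\<forall>F :: nat \<Rightarrow> complex \<Rightarrow> ecomplex. range F \<subseteq> Fam \<longrightarrow>
        (\<exists>r g. strict_mono r \<and> sph_meromorphic_on D g \<and> sph_loc_unif_conv D (F \<circ> r) g))"

definition unit_disc :: "complex set" where
  "unit_disc = ball 0 1"

end

theory Submission imports Defs begin

(* Yet the
   sequence is not normal: f_n(0) = 1 for all n, so any subsequential limit g is finite at 0,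
   hence (being meromorphic) finite on a whole neighbourhood of 0, whereas f_n(t) \<rightarrow> \<infinity> for
   every real t > 0 forces g(t) = \<infinity>. *)

lemma chordal_refl: "chordal p p = 0"
  by (cases p) simp_all

lemma sigma_refl: "sigma p p = 0"
  by (simp add: sigma_def chordal_refl)

lemma chordal_Fin_le_dist: "chordal (Fin x) (Fin y) \<le> cmod (x - y)"
proof -
  have "1 * 1 \<le> (1 + (cmod x)\<^sup>2) * (1 + (cmod y)\<^sup>2)"
    by (intro mult_mono) simp_all
  then have "1 \<le> sqrt ((1 + (cmod x)\<^sup>2) * (1 + (cmod y)\<^sup>2))"
    by simp
  then show ?thesis
    by (simp add: divide_le_eq mult_le_cancel_left1 mult_left_le)
qed

(* The sphere has diameter 1, so chords have length at most 1; this keeps arcsin monotone. *)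
lemma chordal_Fin_le_1: "chordal (Fin x) (Fin y) \<le> 1"
proof -
  have "2 * cmod x * cmod y \<le> 1 + (cmod x * cmod y)\<^sup>2"
    using sum_squares_bound[of 1 "cmod x * cmod y"] by (simp add: power2_eq_square algebra_simps)
  then have "(cmod x + cmod y)\<^sup>2 \<le> (1 + (cmod x)\<^sup>2) * (1 + (cmod y)\<^sup>2)"
    by (simp add: power2_eq_square algebra_simps)
  then have "cmod x + cmod y \<le> sqrt ((1 + (cmod x)\<^sup>2) * (1 + (cmod y)\<^sup>2))"
    by (rule real_le_rsqrt)
  then have "cmod (x - y) \<le> sqrt ((1 + (cmod x)\<^sup>2) * (1 + (cmod y)\<^sup>2))"
    using norm_triangle_ineq4[of x y] by linarith
  moreover have "0 < sqrt ((1 + (cmod x)\<^sup>2) * (1 + (cmod y)\<^sup>2))"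
    by (simp add: add_pos_nonneg)
  ultimately show ?thesis
    by (simp add: pos_divide_le_eq)
qed

lemma sigma_Fin_uniformly_small:
  assumes "e > 0"
  shows "\<exists>d>0. \<forall>x y. cmod (x - y) < d \<longrightarrow> sigma (Fin x) (Fin y) < e"
proof -
  have "isCont arcsin 0"
    by (simp add: isCont_arcsin)
  then obtain d where d: "d > 0" "\<And>s. dist s 0 < d \<Longrightarrow> dist (arcsin s) (arcsin 0) < e"
    using assms unfolding continuous_at_eps_delta by blast
  have "sigma (Fin x) (Fin y) < e" if "cmod (x - y) < d" for x y
  proof -
    have "dist (chordal (Fin x) (Fin y)) 0 < d"
      using that chordal_Fin_le_dist[of x y] by (simp add: dist_real_def)
    then have "\<bar>arcsin (chordal (Fin x) (Fin y))\<bar> < e"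
      using d(2) by (simp add: dist_real_def del: chordal.simps)
    then show ?thesis
      by (simp add: sigma_def del: chordal.simps)
  qed
  then show ?thesis
    using d(1) by blast
qed

(* A point on the unit circle lies on the equator: at distance \<pi>/4 from both poles 0 and \<infinity>. *)
lemma sigma_unit_circle:
  assumes "cmod u = 1"
  shows "sigma (Fin 0) (Fin u) = pi / 4" "sigma Infty (Fin u) = pi / 4"
    and "sigma (Fin u) Infty = pi / 4"
  using assms by (simp_all add: sigma_def arcsin_one_over_sqrt_2)

lemma sigma_zero_infinity: "sigma (Fin 0) Infty = pi / 2"
  by (simp add: sigma_def)

lemma chordal_Fin_far:
  assumes far: "2 * cmod w + 1 \<le> cmod x"
  shows "1 / (4 * sqrt (1 + (cmod w)\<^sup>2)) \<le> chordal (Fin x) (Fin w)"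
proof -
  define S where "S = sqrt (1 + (cmod w)\<^sup>2)"
  have S: "S \<ge> 1"
    by (simp add: S_def)
  have x1: "cmod x \<ge> 1"
    using far norm_ge_zero[of w] by linarith
  have num: "cmod x / 2 \<le> cmod (x - w)"
    using norm_triangle_ineq2[of x w] far by linarith
  have "1 + (cmod x)\<^sup>2 \<le> (2 * cmod x)\<^sup>2"
    using mult_mono[OF x1 x1] by (simp add: power2_eq_square)
  then have "sqrt (1 + (cmod x)\<^sup>2) \<le> sqrt ((2 * cmod x)\<^sup>2)"
    by (rule real_sqrt_le_mono)
  moreover have "sqrt ((2 * cmod x)\<^sup>2) = 2 * cmod x"
    by (simp only: real_sqrt_abs) simp
  ultimately have "sqrt (1 + (cmod x)\<^sup>2) \<le> 2 * cmod x"
    by linarith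
  then have den: "sqrt (1 + (cmod x)\<^sup>2) * S \<le> (2 * cmod x) * S"
    using S by (intro mult_right_mono) simp_all
  have den_pos: "0 < sqrt (1 + (cmod x)\<^sup>2) * S"
    using S by (simp add: add_pos_nonneg)
  have "1 / (4 * S) = (cmod x / 2) / ((2 * cmod x) * S)"
    using x1 S by (auto simp: field_simps)
  also have "\<dots> \<le> cmod (x - w) / (sqrt (1 + (cmod x)\<^sup>2) * S)"
    using num den den_pos by (intro frac_le) simp_all
  also have "\<dots> = chordal (Fin x) (Fin w)"
    by (simp add: S_def real_sqrt_mult)
  finally show ?thesis
    by (simp add: S_def)
qed

lemma sigma_not_tendsto_Fin:
  assumes escape: "filterlim (\<lambda>k. cmod (x k)) at_top sequentially"
  shows "\<not> (\<forall>e>0. \<exists>N. \<forall>k\<ge>N. sigma (Fin (x k)) (Fin w) < e)"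
proof
  assume conv: "\<forall>e>0. \<exists>N. \<forall>k\<ge>N. sigma (Fin (x k)) (Fin w) < e"
  define c where "c = 1 / (4 * sqrt (1 + (cmod w)\<^sup>2))"
  have S: "1 \<le> sqrt (1 + (cmod w)\<^sup>2)"
    by simp
  have c_pos: "0 < c"
    unfolding c_def using S by (intro divide_pos_pos) linarith+
  have c_le_1: "c \<le> 1"
    unfolding c_def using S by (intro divide_le_eq_1_pos[THEN iffD2]) linarith+
  have "arcsin 0 < arcsin c"
    using c_pos c_le_1 by (intro arcsin_less_mono[THEN iffD2]) auto
  then obtain N where N: "\<And>k. k \<ge> N \<Longrightarrow> sigma (Fin (x k)) (Fin w) < arcsin c"
    using conv by auto
  obtain M where M: "\<And>k. k \<ge> M \<Longrightarrow> 2 * cmod w + 1 \<le> cmod (x k)"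
    using escape unfolding filterlim_at_top eventually_sequentially by blast
  define k where "k = max N M"
  have "c \<le> chordal (Fin (x k)) (Fin w)"
    using chordal_Fin_far[OF M] by (simp add: c_def k_def)
  then have "arcsin c \<le> sigma (Fin (x k)) (Fin w)"
    unfolding sigma_def using c_pos c_le_1 chordal_Fin_le_1[of "x k" w]
    by (intro arcsin_le_mono[THEN iffD2]) linarith+
  with N[of k] show False
    by (simp add: k_def)
qed

lemma sph_continuous_on_const: "sph_continuous_on D (\<lambda>z. p)"
  unfolding sph_continuous_on_def sigma_refl by (auto intro: exI[of _ 1])

lemma sph_continuous_on_Fin:
  assumes "continuous_on D \<phi>"
  shows "sph_continuous_on D (\<lambda>z. Fin (\<phi> z))"
  unfolding sph_continuous_on_def
proof (intro ballI allI impI)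
  fix z and e :: real
  assume z: "z \<in> D" and e: "e > 0"
  obtain d1 where d1: "d1 > 0" "\<forall>x y. cmod (x - y) < d1 \<longrightarrow> sigma (Fin x) (Fin y) < e"
    using sigma_Fin_uniformly_small[OF e] by blast
  obtain d where d: "d > 0" "\<forall>w\<in>D. dist w z < d \<longrightarrow> dist (\<phi> w) (\<phi> z) < d1"
    using assms z d1(1) unfolding continuous_on_iff by blast
  then show "\<exists>d>0. \<forall>w\<in>D. cmod (w - z) < d \<longrightarrow> sigma (Fin (\<phi> w)) (Fin (\<phi> z)) < e"
    using d1(2) by (auto simp: dist_norm)
qed

lemma sph_meromorphic_on_Fin:
  assumes "h holomorphic_on D" "open D"
  shows "sph_meromorphic_on D (\<lambda>z. Fin (h z))"
  unfolding sph_meromorphic_on_def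
proof
  fix z0 assume "z0 \<in> D"
  then obtain r where "r > 0" "ball z0 r \<subseteq> D"
    using assms(2) openE by blast
  then show "\<exists>r>0. ball z0 r \<subseteq> D \<and>
      ((\<exists>h'. h' holomorphic_on ball z0 r \<and> (\<forall>w\<in>ball z0 r. Fin (h w) = Fin (h' w))) \<or>
       (\<exists>h'. h' holomorphic_on ball z0 r \<and> (\<forall>w\<in>ball z0 r.
          (h' w = 0 \<longrightarrow> Fin (h w) = Infty) \<and> (h' w \<noteq> 0 \<longrightarrow> Fin (h w) = Fin (1 / h' w)))))"
    using holomorphic_on_subset[OF assms(1)] by blast
qed

(* A meromorphic function that is finite at a point is finite near that point: in the
   reciprocal chart, the local function 1/g is nonzero at the point, hence nearby. *)
lemma sph_meromorphic_finite_near: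
  assumes mer: "sph_meromorphic_on D g" and z0: "z0 \<in> D" and fin: "g z0 \<noteq> Infty"
  shows "\<exists>\<rho>>0. \<forall>w\<in>ball z0 \<rho>. g w \<noteq> Infty"
proof -
  obtain r where r: "r > 0" and charts:
    "(\<exists>h. h holomorphic_on ball z0 r \<and> (\<forall>w\<in>ball z0 r. g w = Fin (h w))) \<or>
     (\<exists>h. h holomorphic_on ball z0 r \<and> (\<forall>w\<in>ball z0 r.
        (h w = 0 \<longrightarrow> g w = Infty) \<and> (h w \<noteq> 0 \<longrightarrow> g w = Fin (1 / h w))))"
    using mer z0 unfolding sph_meromorphic_on_def by blast
  from charts show ?thesis
  proof (elim disjE exE conjE)
    fix h assume "\<forall>w\<in>ball z0 r. g w = Fin (h w)"
    then show ?thesis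
      using r by auto
  next
    fix h assume hol: "h holomorphic_on ball z0 r" and
      h: "\<forall>w\<in>ball z0 r. (h w = 0 \<longrightarrow> g w = Infty) \<and> (h w \<noteq> 0 \<longrightarrow> g w = Fin (1 / h w))"
    have "h z0 \<noteq> 0"
      using h fin r by auto
    moreover have "continuous_on (ball z0 r) h"
      using hol by (rule holomorphic_on_imp_continuous_on)
    ultimately obtain d where d: "d > 0"
      "\<forall>w\<in>ball z0 r. dist w z0 < d \<longrightarrow> dist (h w) (h z0) < cmod (h z0)"
      using r unfolding continuous_on_iff by (metis centre_in_ball zero_less_norm_iff)
    have "h w \<noteq> 0" if "w \<in> ball z0 (min r d)" for w
      using d(2) that by (force simp: dist_commute)
    then show ?thesis
      using h r d(1) by (intro exI[of _ "min r d"]) auto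
  qed
qed

lemma sph_loc_unif_conv_pointwise:
  assumes "sph_loc_unif_conv D F g" "z \<in> D" "e > 0"
  shows "\<exists>N. \<forall>k\<ge>N. sigma (F k z) (g z) < e"
proof -
  have "compact {z} \<and> {z} \<subseteq> D"
    using assms(2) by simp
  then obtain N where "\<forall>k\<ge>N. \<forall>z'\<in>{z}. sigma (F k z') (g z') < e"
    using assms(1,3) unfolding sph_loc_unif_conv_def by meson
  then show ?thesis
    by auto
qed

(* Writing exp w = exp (Re w) \<cdot> exp (i Im w) with exp (Re w) > 0, exp w cannot be the
   antipode of exp (i Im w). *)
lemma exp_neq_minus_exp_Im: "exp w \<noteq> - exp (\<i> * of_real (Im w))"
proof
  define E where "E = exp (\<i> * of_real (Im w))"
  assume "exp w = - exp (\<i> * of_real (Im w))"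
  moreover have "exp w = of_real (exp (Re w)) * E"
    unfolding E_def by (subst complex_eq[of w]) (simp add: exp_add exp_of_real mult.commute)
  ultimately have "of_real (exp (Re w)) * E = (-1) * E"
    by (simp add: E_def)
  moreover have "E \<noteq> 0"
    by (simp add: E_def)
  ultimately have "(of_real (exp (Re w)) :: complex) = of_real (-1)"
    by (metis mult_right_cancel of_real_1 of_real_minus)
  then have "exp (Re w) = -1"
    by (simp only: of_real_eq_iff)
  then show False
    using exp_gt_zero[of "Re w"] by linarith
qed

(* The sequence exp (n z) has no subsequence converging locally uniformly to a
   meromorphic function: the limit would be 1 at 0 but \<infinity> on the positive real axis. *)
lemma exp_family_not_normal:
  "\<not> normal_family unit_disc (range (\<lambda>n z. Fin (exp (of_nat n * z))))"
  (is "\<not> normal_family unit_disc (range ?F)")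
proof
  assume "normal_family unit_disc (range ?F)"
  then have "range ?F \<subseteq> range ?F \<longrightarrow>
      (\<exists>r g. strict_mono r \<and> sph_meromorphic_on unit_disc g \<and> sph_loc_unif_conv unit_disc (?F \<circ> r) g)"
    unfolding normal_family_def by (rule spec)
  then obtain r g where r: "strict_mono r" and mer: "sph_meromorphic_on unit_disc g"
    and conv: "sph_loc_unif_conv unit_disc (?F \<circ> r) g"
    by blast
  have pointwise: "\<exists>N. \<forall>k\<ge>N. sigma (Fin (exp (of_nat (r k) * z))) (g z) < e"
    if "z \<in> unit_disc" "e > 0" for z e
    using sph_loc_unif_conv_pointwise[OF conv that] by simp
  have g0: "g 0 \<noteq> Infty"
  proof
    assume "g 0 = Infty"
    then obtain N where "sigma (Fin 1) Infty < pi / 4"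
      using pointwise[of 0 "pi / 4"] by (auto simp: unit_disc_def)
    then show False
      using sigma_unit_circle(3)[of 1] by simp
  qed
  then obtain \<rho> where \<rho>: "\<rho> > 0" "\<forall>w\<in>ball 0 \<rho>. g w \<noteq> Infty"
    using sph_meromorphic_finite_near[OF mer _ g0] by (auto simp: unit_disc_def)
  define t where "t = min \<rho> 1 / 2"
  have t: "0 < t" "complex_of_real t \<in> ball 0 \<rho>" "complex_of_real t \<in> unit_disc"
    using \<rho>(1) by (auto simp: t_def unit_disc_def)
  then obtain w where w: "g (of_real t) = Fin w"
    using \<rho>(2) by (cases "g (of_real t)") auto
  have "filterlim (\<lambda>k. t * real (r k)) at_top sequentially"
    using filterlim_compose[OF filterlim_real_sequentially filterlim_subseq[OF r]] t(1)
    by (intro filterlim_tendsto_pos_mult_at_top[OF tendsto_const]) auto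
  then have "filterlim (\<lambda>k. exp (t * real (r k))) at_top sequentially"
    by (rule filterlim_compose[OF exp_at_top])
  moreover have "exp (t * real (r k)) = cmod (exp (of_nat (r k) * complex_of_real t))" for k
    by (simp add: exp_of_real[symmetric] mult.commute)
  ultimately have "filterlim (\<lambda>k. cmod (exp (of_nat (r k) * complex_of_real t))) at_top sequentially"
    by simp
  then have "\<not> (\<forall>e>0. \<exists>N. \<forall>k\<ge>N. sigma (Fin (exp (of_nat (r k) * of_real t))) (Fin w) < e)"
    by (rule sigma_not_tendsto_Fin)
  moreover have "\<forall>e>0. \<exists>N. \<forall>k\<ge>N. sigma (Fin (exp (of_nat (r k) * of_real t))) (Fin w) < e"
    using pointwise[OF t(3)] w by simp
  ultimately show False
    by blast
qed

lemma omitted_continuous_criterion_fails: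
  fixes f a b c :: "nat \<Rightarrow> complex \<Rightarrow> ecomplex" and \<epsilon> :: real
  assumes "\<epsilon> > 0" and "\<And>n. sph_meromorphic_on D (f n)"
    and "\<And>n. sph_continuous_on D (a n) \<and> sph_continuous_on D (b n) \<and> sph_continuous_on D (c n)"
    and "\<And>n z. z \<in> D \<Longrightarrow> f n z \<notin> {a n z, b n z, c n z}"
    and "\<And>n z. z \<in> D \<Longrightarrow> sigma (a n z) (b n z) * sigma (a n z) (c n z) * sigma (b n z) (c n z) \<ge> \<epsilon>"
    and "\<not> normal_family D (range f)"
  shows "\<not> (\<forall>(Fam :: (complex \<Rightarrow> ecomplex) set) (\<epsilon>::real). \<epsilon> > 0 \<and>
              (\<forall>g\<in>Fam. sph_meromorphic_on D g \<and>
                 (\<exists>ag bg cg. sph_continuous_on D ag \<and> sph_continuous_on D bg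
                    \<and> sph_continuous_on D cg
                    \<and> (\<forall>z\<in>D. g z \<notin> {ag z, bg z, cg z}
                         \<and> sigma (ag z) (bg z) * sigma (ag z) (cg z) * sigma (bg z) (cg z) \<ge> \<epsilon>)))
              \<longrightarrow> normal_family D Fam)" (is "\<not> ?criterion")
proof
  assume ?criterion
  then have "normal_family D (range f)"
    using assms(1-5) by (elim allE[of _ "range f"] allE[of _ \<epsilon>] mp) blast
  with assms(6) show False ..
qed

theorem mainTheorem2:
  fixes f a b c :: "nat \<Rightarrow> complex \<Rightarrow> ecomplex"
  assumes f_def: "\<And>n z. f n z = Fin (exp (of_nat n * z))"
      and a_def: "\<And>n z. a n z = Fin 0"
      and b_def: "\<And>n z. b n z = Infty"
      and c_def: "\<And>n z. c n z = Fin (- exp (\<i> * of_nat n * of_real (Im z)))"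
  shows "(\<forall>n. sph_continuous_on unit_disc (a n) \<and> sph_continuous_on unit_disc (b n)
              \<and> sph_continuous_on unit_disc (c n))
       \<and> (\<forall>n. \<forall>z\<in>unit_disc. f n z \<notin> {a n z, b n z, c n z})
       \<and> (\<forall>n. \<forall>z\<in>unit_disc. sigma (a n z) (b n z) = pi / 2
              \<and> sigma (a n z) (c n z) = pi / 4 \<and> sigma (b n z) (c n z) = pi / 4)
       \<and> \<not> normal_family unit_disc (range f)
       \<and> \<not> (\<forall>(Fam :: (complex \<Rightarrow> ecomplex) set) (\<epsilon>::real). \<epsilon> > 0 \<and>
              (\<forall>g\<in>Fam. sph_meromorphic_on unit_disc g \<and>
                 (\<exists>ag bg cg. sph_continuous_on unit_disc ag \<and> sph_continuous_on unit_disc bg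
                    \<and> sph_continuous_on unit_disc cg
                    \<and> (\<forall>z\<in>unit_disc. g z \<notin> {ag z, bg z, cg z}
                         \<and> sigma (ag z) (bg z) * sigma (ag z) (cg z) * sigma (bg z) (cg z) \<ge> \<epsilon>)))
              \<longrightarrow> normal_family unit_disc Fam)"
proof -
  (* c_n(z) is written as -exp (i Im (n z)) so that exp_neq_minus_exp_Im applies to w = n z. *)
  have fun_eqs: "f = (\<lambda>n z. Fin (exp (of_nat n * z)))" "a = (\<lambda>n z. Fin 0)" "b = (\<lambda>n z. Infty)"
    "c = (\<lambda>n z. Fin (- exp (\<i> * of_real (Im (of_nat n * z)))))"
    using f_def a_def b_def c_def by (auto intro!: ext simp: mult.assoc)
  have continuous: "\<forall>n. sph_continuous_on unit_disc (a n) \<and> sph_continuous_on unit_disc (b n)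
              \<and> sph_continuous_on unit_disc (c n)"
    unfolding fun_eqs
    by (auto intro!: sph_continuous_on_const sph_continuous_on_Fin continuous_intros)
  have omits: "\<forall>n. \<forall>z\<in>unit_disc. f n z \<notin> {a n z, b n z, c n z}"
  proof (intro allI ballI)
    fix n z
    show "f n z \<notin> {a n z, b n z, c n z}"
      unfolding fun_eqs using exp_neq_minus_exp_Im[of "of_nat n * z"] by auto
  qed
  have unit: "\<And>n z. cmod (- exp (\<i> * complex_of_real (Im (of_nat n * z)))) = 1"
    by (simp add: norm_exp_eq_Re)
  have separated: "\<forall>n. \<forall>z\<in>unit_disc. sigma (a n z) (b n z) = pi / 2
              \<and> sigma (a n z) (c n z) = pi / 4 \<and> sigma (b n z) (c n z) = pi / 4"
    unfolding fun_eqs using sigma_zero_infinity sigma_unit_circle(1,2)[OF unit] by simp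
  have meromorphic: "\<And>n. sph_meromorphic_on unit_disc (f n)"
    unfolding fun_eqs unit_disc_def by (intro sph_meromorphic_on_Fin holomorphic_intros) simp
  have not_normal: "\<not> normal_family unit_disc (range f)"
    unfolding fun_eqs by (rule exp_family_not_normal)
  have bound: "sigma (a n z) (b n z) * sigma (a n z) (c n z) * sigma (b n z) (c n z)
          \<ge> (pi / 2) * (pi / 4) * (pi / 4)" if "z \<in> unit_disc" for n z
    using separated that by (auto simp only: order_refl)
  have "(pi / 2) * (pi / 4) * (pi / 4) > 0"
    by simp
  note criterion_fails = omitted_continuous_criterion_fails
    [OF this meromorphic continuous[rule_format] omits[rule_format] bound not_normal]
  show ?thesis
    using continuous omits separated not_normal criterion_fails by (intro conjI)
qed

end
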